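(* Let $k,l$ be positive integers with $k \ge 3l$. Then every graph $G$ with $\chi(G) > k$ contains a weakly $l$-connected subgraph $H$ such that $\chi(H) > k-2l$.
   Context: Graphs are finite and simple; $\chi$ denotes the chromatic number. A separation of a graph $G$ is a pair $(A,B)$ with $A\cup B=V(G)$ such that every edge has both ends in $A$ or both ends in $B$; it is proper if $A-B\neq\emptyset$ and $B-A\neq\emptyset$; its order is $|A\cap B|$. A graph $G$ is weakly $k$-connected if for every proper separation $(A,B)$ of $G$ of order at most $k$ we have $\min\{|A-B|,|B-A|\} < |A\cap B|$. *)

theory Defs
  imports Main
begin

definition graph :: "'a set \<Rightarrow> 'a set set \<Rightarrow> bool" where
  "graph V E \<longleftrightarrow> finite V \<and> (\<forall>e\<in>E. \<exists>u v. u \<noteq> v \<and> u \<in> V \<and> v \<in> V \<and> e = {u, v})"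

definition subgraph :: "'a set \<Rightarrow> 'a set set \<Rightarrow> 'a set \<Rightarrow> 'a set set \<Rightarrow> bool" where
  "subgraph VH EH V E \<longleftrightarrow> graph VH EH \<and> VH \<subseteq> V \<and> EH \<subseteq> E"

definition colourable :: "'a set \<Rightarrow> 'a set set \<Rightarrow> nat \<Rightarrow> bool" where
  "colourable V E k \<longleftrightarrow> (\<exists>f :: 'a \<Rightarrow> nat. (\<forall>v\<in>V. f v < k) \<and>
      (\<forall>e\<in>E. \<forall>u v. e = {u, v} \<and> u \<noteq> v \<longrightarrow> f u \<noteq> f v))"

definition chromatic_number :: "'a set \<Rightarrow> 'a set set \<Rightarrow> nat" where
  "chromatic_number V E = (LEAST k. colourable V E k)"

definition separation :: "'a set \<Rightarrow> 'a set set \<Rightarrow> 'a set \<Rightarrow> 'a set \<Rightarrow> bool" where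
  "separation V E A B \<longleftrightarrow> A \<union> B = V \<and> (\<forall>e\<in>E. e \<subseteq> A \<or> e \<subseteq> B)"

definition proper_separation :: "'a set \<Rightarrow> 'a set set \<Rightarrow> 'a set \<Rightarrow> 'a set \<Rightarrow> bool" where
  "proper_separation V E A B \<longleftrightarrow> separation V E A B \<and> A - B \<noteq> {} \<and> B - A \<noteq> {}"

definition sep_order :: "'a set \<Rightarrow> 'a set \<Rightarrow> nat" where
  "sep_order A B = card (A \<inter> B)"

definition weakly_connected :: "nat \<Rightarrow> 'a set \<Rightarrow> 'a set set \<Rightarrow> bool" where
  "weakly_connected k V E \<longleftrightarrow>
     (\<forall>A B. proper_separation V E A B \<and> sep_order A B \<le> k \<longrightarrow>
        min (card (A - B)) (card (B - A)) < card (A \<inter> B))"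

end

theory Submission
  imports Defs
begin

text \<open>Pass to an inclusion-minimal vertex set W whose induced subgraph is not k-colourable, and
let X be an inclusion-minimal side of a separation (X, Y) of G[W] of order at most 2l with
X - Y nonempty. As Y is a proper subset of W it is k-colourable, and every colouring of X - Y
with c colours, c + |X \<inter> Y| \<le> k, could be glued to it; hence X - Y, and so G[X], needs more
than k - 2l colours, and X - Y has more than l vertices because k \<ge> 3l. A separation (C, D) of
G[X] of order at most l whose sides both have at least |C \<inter> D| private vertices yields the
separations (C, D \<union> Y) and (D, C \<union> Y) of G[W]; minimality of X and a count of the vertices of
X \<inter> Y on either side show that C - (D \<union> Y) and D - (C \<union> Y) are empty, so X - Y \<subseteq> C \<inter> D
would have at most l vertices.\<close>

definition induced :: "'a set set \<Rightarrow> 'a set \<Rightarrow> 'a set set" where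
  "induced E W = {e \<in> E. e \<subseteq> W}"

definition critical :: "nat \<Rightarrow> 'a set set \<Rightarrow> 'a set \<Rightarrow> bool" where
  "critical k E W \<longleftrightarrow>
     \<not> colourable W (induced E W) k \<and> (\<forall>U. U \<subset> W \<longrightarrow> colourable U (induced E U) k)"

definition small_separation :: "nat \<Rightarrow> 'a set \<Rightarrow> 'a set set \<Rightarrow> 'a set \<Rightarrow> 'a set \<Rightarrow> bool" where
  "small_separation m W E X Y \<longleftrightarrow>
     separation W (induced E W) X Y \<and> card (X \<inter> Y) \<le> m \<and> X - Y \<noteq> {}"

lemma induced_mono: "U \<subseteq> W \<Longrightarrow> induced E U \<subseteq> induced E W"
  unfolding induced_def by blast

lemma graph_induced_self:
  assumes "graph V E"
  shows "induced E V = E"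
proof -
  have "\<forall>e\<in>E. \<exists>u v. u \<noteq> v \<and> u \<in> V \<and> v \<in> V \<and> e = {u, v}"
    using assms by (simp add: graph_def)
  then show ?thesis
    unfolding induced_def by auto
qed

lemma colourable_mono:
  assumes "colourable V E c" and "c \<le> d"
  shows "colourable V E d"
proof -
  obtain f where "\<forall>v\<in>V. f v < c" and "\<forall>e\<in>E. \<forall>u v. e = {u, v} \<and> u \<noteq> v \<longrightarrow> f u \<noteq> f v"
    using assms(1) unfolding colourable_def by blast
  moreover from this(1) have "\<forall>v\<in>V. f v < d"
    using less_le_trans[OF _ assms(2)] by blast
  ultimately show ?thesis
    unfolding colourable_def by blast
qed

lemma colourable_subgraph:
  assumes "colourable V E c" and "V' \<subseteq> V" and "E' \<subseteq> E"
  shows "colourable V' E' c"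
proof -
  obtain f where "\<forall>v\<in>V. f v < c" and "\<forall>e\<in>E. \<forall>u v. e = {u, v} \<and> u \<noteq> v \<longrightarrow> f u \<noteq> f v"
    using assms(1) unfolding colourable_def by blast
  with assms(2,3) show ?thesis
    unfolding colourable_def by (intro exI[of _ f]) blast
qed

lemma colourable_card:
  assumes "finite V" and "\<forall>e\<in>E. e \<subseteq> V"
  shows "colourable V E (card V)"
proof -
  obtain f where f: "bij_betw f V {0..<card V}"
    using ex_bij_betw_finite_nat[OF assms(1)] by blast
  then have "\<forall>v\<in>V. f v < card V"
    by (auto simp: bij_betw_def)
  moreover have "f u \<noteq> f v" if "{u, v} \<in> E" and "u \<noteq> v" for u v
  proof -
    have "u \<in> V" and "v \<in> V"
      using assms(2) that(1) by auto
    with f that(2) show ?thesis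
      by (auto simp: bij_betw_def inj_on_def)
  qed
  ultimately show ?thesis
    unfolding colourable_def by blast
qed

lemma less_chromatic_number_iff:
  assumes "finite V" and "\<forall>e\<in>E. e \<subseteq> V"
  shows "c < chromatic_number V E \<longleftrightarrow> \<not> colourable V E c"
proof
  assume "c < chromatic_number V E"
  show "\<not> colourable V E c"
  proof
    assume "colourable V E c"
    then have "chromatic_number V E \<le> c"
      unfolding chromatic_number_def by (rule Least_le)
    with \<open>c < chromatic_number V E\<close> show False
      by simp
  qed
next
  assume "\<not> colourable V E c"
  have "colourable V E (chromatic_number V E)"
    unfolding chromatic_number_def by (rule LeastI[of "colourable V E", OF colourable_card[OF assms]])
  then have "\<not> chromatic_number V E \<le> c"
    using \<open>\<not> colourable V E c\<close> colourable_mono by blast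
  then show "c < chromatic_number V E"
    by simp
qed

lemma less_chromatic_number_induced_iff:
  "finite V \<Longrightarrow> c < chromatic_number V (induced E V) \<longleftrightarrow> \<not> colourable V (induced E V) c"
  by (rule less_chromatic_number_iff) (auto simp: induced_def)

lemma subgraph_induced:
  assumes "graph V E" and "W \<subseteq> V"
  shows "subgraph W (induced E W) V E"
proof -
  have "finite W"
    using assms(1) finite_subset[OF assms(2)] unfolding graph_def by blast
  moreover have "\<exists>u v. u \<noteq> v \<and> u \<in> W \<and> v \<in> W \<and> e = {u, v}" if "e \<in> induced E W" for e
  proof -
    from that have "e \<in> E" and "e \<subseteq> W"
      unfolding induced_def by auto
    then obtain u v where "u \<noteq> v" and "e = {u, v}"
      using assms(1) unfolding graph_def by blast
    with \<open>e \<subseteq> W\<close> show ?thesis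
      by blast
  qed
  moreover have "induced E W \<subseteq> E"
    unfolding induced_def by blast
  ultimately show ?thesis
    using assms(2) unfolding subgraph_def graph_def by blast
qed

lemma proper_separation_commute:
  "proper_separation V E A B \<longleftrightarrow> proper_separation V E B A"
  unfolding proper_separation_def separation_def by blast

lemma separation_induced_extend:
  assumes "separation W (induced E W) X Y" and "separation X (induced E X) C D"
  shows "separation W (induced E W) C (D \<union> Y)"
  using assms unfolding separation_def induced_def by blast

text \<open>Colour Y first; the vertices of X - Y only see X \<inter> Y, so they may use c colours
avoiding the at most |X \<inter> Y| colours that appear there.\<close>
lemma colourable_glue:
  assumes sep: "separation W (induced E W) X Y" and fin: "finite (X \<inter> Y)"
    and colY: "colourable Y (induced E Y) k"
    and colXY: "colourable (X - Y) (induced E (X - Y)) c"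
    and budget: "c + card (X \<inter> Y) \<le> k"
  shows "colourable W (induced E W) k"
proof -
  obtain g where g_range: "\<forall>v\<in>Y. g v < k"
    and g_proper: "\<forall>e\<in>induced E Y. \<forall>u v. e = {u, v} \<and> u \<noteq> v \<longrightarrow> g u \<noteq> g v"
    using colY unfolding colourable_def by blast
  obtain f where f_range: "\<forall>v\<in>X - Y. f v < c"
    and f_proper: "\<forall>e\<in>induced E (X - Y). \<forall>u v. e = {u, v} \<and> u \<noteq> v \<longrightarrow> f u \<noteq> f v"
    using colXY unfolding colourable_def by blast
  have "card {..<c} \<le> card ({..<k} - g ` (X \<inter> Y))"
    using diff_card_le_card_Diff[of "g ` (X \<inter> Y)" "{..<k}"] card_image_le[OF fin, of g] fin budget
    by simp
  then obtain p where p_range: "p ` {..<c} \<subseteq> {..<k} - g ` (X \<inter> Y)" and p_inj: "inj_on p {..<c}"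
    using card_le_inj[of "{..<c}"] by blast
  define h where "h v = (if v \<in> Y then g v else p (f v))" for v
  have h_range: "h v < k" if "v \<in> W" for v
    using that sep g_range f_range p_range by (auto simp: h_def separation_def)
  have h_cross: "h u \<noteq> h v" if "{u, v} \<in> induced E W" "u \<in> Y" "v \<notin> Y" for u v
  proof -
    have "{u, v} \<subseteq> X"
      using sep that unfolding separation_def by blast
    then have "h u \<in> g ` (X \<inter> Y)" and "h v \<notin> g ` (X \<inter> Y)"
      using that f_range p_range by (auto simp: h_def)
    then show ?thesis by metis
  qed
  have h_proper: "h u \<noteq> h v" if "{u, v} \<in> induced E W" "u \<noteq> v" for u v
  proof (cases "u \<in> Y"; cases "v \<in> Y")
    assume "u \<in> Y" "v \<in> Y"
    then show ?thesis
      using that g_proper by (auto simp: h_def induced_def)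
  next
    assume "u \<in> Y" "v \<notin> Y"
    then show ?thesis
      using that h_cross by blast
  next
    assume "u \<notin> Y" "v \<in> Y"
    then show ?thesis
      using that h_cross[of v u] by (metis insert_commute)
  next
    assume "u \<notin> Y" "v \<notin> Y"
    moreover have "{u, v} \<subseteq> X"
      using sep that \<open>u \<notin> Y\<close> unfolding separation_def by blast
    ultimately have "f u \<noteq> f v" and "f u < c" and "f v < c"
      using that f_proper f_range by (auto simp: induced_def)
    then show ?thesis
      using \<open>u \<notin> Y\<close> \<open>v \<notin> Y\<close> p_inj by (auto simp: h_def inj_on_def)
  qed
  show ?thesis
    unfolding colourable_def using h_range h_proper by blast
qed

lemma obtain_critical_subset:
  assumes "finite V" and "\<not> colourable V (induced E V) k"
  obtains W where "W \<subseteq> V" and "critical k E W"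
proof -
  let ?N = "{W. W \<subseteq> V \<and> \<not> colourable W (induced E W) k}"
  have "finite ?N"
    using assms(1) by (auto intro: finite_subset[of _ "Pow V"])
  moreover have "V \<in> ?N"
    using assms(2) by simp
  ultimately obtain W where W: "W \<in> ?N" and min: "\<forall>U\<in>?N. U \<le> W \<longrightarrow> W = U"
    by (meson finite_has_minimal2)
  then have "critical k E W"
    unfolding critical_def by auto
  with W show thesis
    using that by blast
qed

lemma critical_interior_not_colourable:
  assumes "critical k E W" and "finite W"
    and sep: "separation W (induced E W) X Y" and "X - Y \<noteq> {}"
    and "c + card (X \<inter> Y) \<le> k"
  shows "\<not> colourable (X - Y) (induced E (X - Y)) c"
proof
  assume "colourable (X - Y) (induced E (X - Y)) c"
  moreover have "Y \<subset> W" and "finite (X \<inter> Y)"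
    using sep assms(2,4) unfolding separation_def by auto
  moreover from \<open>Y \<subset> W\<close> have "colourable Y (induced E Y) k"
    using assms(1) unfolding critical_def by blast
  ultimately have "colourable W (induced E W) k"
    using colourable_glue[OF sep] assms(5) by blast
  with assms(1) show False
    unfolding critical_def by blast
qed

lemma obtain_minimal_small_separation:
  assumes "finite W" and "W \<noteq> {}"
  obtains X Y where "small_separation m W E X Y"
    and "\<And>X' Y'. small_separation m W E X' Y' \<Longrightarrow> \<not> X' \<subset> X"
proof -
  let ?S = "{X. \<exists>Y. small_separation m W E X Y}"
  have "W \<in> ?S"
    using assms(2) unfolding small_separation_def
    by (intro CollectI exI[of _ "{}"]) (auto simp: separation_def induced_def)
  moreover have "finite ?S"
    using assms(1)
    by (auto simp: small_separation_def separation_def intro: finite_subset[of _ "Pow W"])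
  ultimately obtain X where "X \<in> ?S" and min: "\<forall>X'\<in>?S. X' \<le> X \<longrightarrow> X = X'"
    by (meson finite_has_minimal2)
  then obtain Y where "small_separation m W E X Y"
    by blast
  moreover have "\<not> X' \<subset> X" if "small_separation m W E X' Y'" for X' Y'
    using min that by blast
  ultimately show thesis
    by (rule that)
qed

text \<open>A bad separation (C, D) of G[X] would make C or D a smaller side of a separation of G[W]
of order at most 2l.\<close>
lemma weakly_connected_minimal_side:
  assumes finW: "finite W" and small: "small_separation (2 * l) W E X Y"
    and minimal: "\<And>X' Y'. small_separation (2 * l) W E X' Y' \<Longrightarrow> \<not> X' \<subset> X"
    and large: "l < card (X - Y)"
  shows "weakly_connected l X (induced E X)"
proof -
  have sep: "separation W (induced E W) X Y" and order: "card (X \<inter> Y) \<le> 2 * l"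
    using small unfolding small_separation_def by auto
  have finX: "finite X"
    using sep finW unfolding separation_def by (auto intro: finite_subset)
  let ?S = "X \<inter> Y"
  have side: "2 * l < card (C \<inter> D) + card (?S \<inter> (C - D))"
    if CD: "proper_separation X (induced E X) C D" and "\<not> C \<subseteq> D \<union> Y" for C D
  proof -
    have "C \<subset> X"
      using CD unfolding proper_separation_def separation_def by blast
    then have "\<not> small_separation (2 * l) W E C (D \<union> Y)"
      using minimal by blast
    moreover have "separation W (induced E W) C (D \<union> Y)"
      using separation_induced_extend[OF sep] CD unfolding proper_separation_def by blast
    moreover have "C - (D \<union> Y) \<noteq> {}"
      using that by blast
    ultimately have "2 * l < card (C \<inter> (D \<union> Y))"
      unfolding small_separation_def by simp
    also have "\<dots> \<le> card ((C \<inter> D) \<union> (?S \<inter> (C - D)))"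
      using \<open>C \<subset> X\<close> by (intro card_mono finite_subset[OF _ finX]) auto
    also have "\<dots> \<le> card (C \<inter> D) + card (?S \<inter> (C - D))"
      by (rule card_Un_le)
    finally show ?thesis .
  qed
  have inside: "card (C - D) \<le> card (?S \<inter> (C - D))"
    if "proper_separation X (induced E X) C D" and "C \<subseteq> D \<union> Y" for C D
    using that finX by (intro card_mono) (auto simp: proper_separation_def separation_def)
  have split: "card (?S \<inter> (C - D)) + card (?S \<inter> (D - C)) \<le> 2 * l" for C D
  proof -
    have "card (?S \<inter> (C - D)) + card (?S \<inter> (D - C)) = card (?S \<inter> (C - D) \<union> ?S \<inter> (D - C))"
      using finX by (intro card_Un_disjoint[symmetric]) auto
    also have "\<dots> \<le> card ?S"
      using finX by (intro card_mono) auto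
    finally show ?thesis
      using order by linarith
  qed
  have contained: "C \<subseteq> D \<union> Y"
    if CD: "proper_separation X (induced E X) C D" and "card (C \<inter> D) \<le> l"
      and "card (C \<inter> D) \<le> card (C - D)" and "card (C \<inter> D) \<le> card (D - C)" for C D
  proof (rule ccontr)
    assume "\<not> C \<subseteq> D \<union> Y"
    then have C_large: "2 * l < card (C \<inter> D) + card (?S \<inter> (C - D))"
      by (rule side[OF CD])
    have DC: "proper_separation X (induced E X) D C"
      using CD proper_separation_commute by blast
    show False
    proof (cases "D \<subseteq> C \<union> Y")
      case True
      then show False
        using inside[OF DC] C_large split[of C D] that(4) by linarith
    next
      case False
      then have "2 * l < card (D \<inter> C) + card (?S \<inter> (D - C))"
        by (rule side[OF DC])
      then show False
        using C_large split[of C D] that(2) by (simp add: Int_commute)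
    qed
  qed
  show ?thesis
    unfolding weakly_connected_def
  proof (intro allI impI, elim conjE)
    fix C D
    assume CD: "proper_separation X (induced E X) C D" and "sep_order C D \<le> l"
    then have small: "card (C \<inter> D) \<le> l"
      by (simp add: sep_order_def)
    show "min (card (C - D)) (card (D - C)) < card (C \<inter> D)"
    proof (rule ccontr)
      assume "\<not> ?thesis"
      then have CD_large: "card (C \<inter> D) \<le> card (C - D)" "card (C \<inter> D) \<le> card (D - C)"
        by auto
      have DC: "proper_separation X (induced E X) D C"
        using CD proper_separation_commute by blast
      have "C \<subseteq> D \<union> Y" and "D \<subseteq> C \<union> Y"
        using contained[OF CD small CD_large] contained[OF DC] small CD_large
        by (simp_all add: Int_commute)
      then have "X - Y \<subseteq> C \<inter> D"
        using CD unfolding proper_separation_def separation_def by blast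
      then have "card (X - Y) \<le> card (C \<inter> D)"
        using finX CD by (intro card_mono) (auto simp: proper_separation_def separation_def)
      then show False
        using small large by linarith
    qed
  qed
qed

lemma critical_obtain_weakly_connected:
  assumes critical: "critical k E W" and finW: "finite W" and "3 * l \<le> k"
  obtains X where "X \<subseteq> W" and "weakly_connected l X (induced E X)"
    and "\<not> colourable X (induced E X) (k - 2 * l)"
proof -
  have "W \<noteq> {}"
    using critical unfolding critical_def colourable_def induced_def by auto
  with finW obtain X Y where small: "small_separation (2 * l) W E X Y"
    and minimal: "\<And>X' Y'. small_separation (2 * l) W E X' Y' \<Longrightarrow> \<not> X' \<subset> X"
    by (rule obtain_minimal_small_separation[where m = "2 * l" and E = E]) (rule that)
  then have sep: "separation W (induced E W) X Y" and order: "card (X \<inter> Y) \<le> 2 * l"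
    and interior_ne: "X - Y \<noteq> {}"
    unfolding small_separation_def by auto
  have XW: "X \<subseteq> W"
    using sep unfolding separation_def by blast
  note interior = critical_interior_not_colourable[OF critical finW sep interior_ne]
  have "colourable (X - Y) (induced E (X - Y)) (card (X - Y))"
    using finW XW by (intro colourable_card) (auto simp: induced_def intro: finite_subset)
  then have "l < card (X - Y)"
    using interior[of "card (X - Y)"] order assms(3) by linarith
  with finW small minimal have "weakly_connected l X (induced E X)"
    by (rule weakly_connected_minimal_side)
  moreover have "\<not> colourable X (induced E X) (k - 2 * l)"
  proof -
    have "\<not> colourable (X - Y) (induced E (X - Y)) (k - 2 * l)"
      using interior[of "k - 2 * l"] order assms(3) by simp
    then show ?thesis
      using colourable_subgraph[OF _ Diff_subset induced_mono[OF Diff_subset]] by blast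
  qed
  ultimately show thesis
    by (rule that[OF XW])
qed

theorem lemma2p1:
  fixes k l :: nat and V :: "'a set" and E :: "'a set set"
  assumes "l > 0" and "k > 0" and "k \<ge> 3 * l"
    and "graph V E" and "chromatic_number V E > k"
  shows "\<exists>VH EH. subgraph VH EH V E \<and> weakly_connected l VH EH
           \<and> chromatic_number VH EH > k - 2 * l"
proof -
  have finV: "finite V"
    using assms(4) unfolding graph_def by blast
  have "\<not> colourable V (induced E V) k"
    using assms(5) less_chromatic_number_induced_iff[OF finV, of k E]
    unfolding graph_induced_self[OF assms(4)] by blast
  then obtain W where WV: "W \<subseteq> V" and critical: "critical k E W"
    using obtain_critical_subset finV by metis
  have finW: "finite W"
    using WV finV by (rule finite_subset)
  obtain X where XW: "X \<subseteq> W" and weak: "weakly_connected l X (induced E X)"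
    and "\<not> colourable X (induced E X) (k - 2 * l)"
    by (rule critical_obtain_weakly_connected[OF critical finW assms(3)])
  moreover have XV: "X \<subseteq> V"
    using XW WV by (rule order_trans)
  ultimately have "k - 2 * l < chromatic_number X (induced E X)"
    using less_chromatic_number_induced_iff[OF finite_subset[OF XV finV]] by blast
  then show ?thesis
    using subgraph_induced[OF assms(4) XV] weak by blast
qed

end
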